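(* Let $\mathcal L>0$, $m_\pm>0$, $\rho_\pm>0$, $S_+<0<S_-$, $\lambda_\pm=\sqrt{\rho_\pm/m_\pm}$, and $S_I=0$. Consider the ODE system $\dot q_1=\mathcal H_1^{\rm p}(q_1,q_2)$, $\dot q_2=\mathcal H_2^{\rm p}(q_1,q_2)$ with \[ \mathcal H_1^{\rm p}(q_1,q_2)=\tfrac12\Big(-\tfrac{S_+}{\rho_+}m_+\lambda_+\tanh\big(\lambda_+\tfrac{q_2-q_1}{2}\big)-\tfrac{S_-}{\rho_-}m_-\lambda_-\tanh(\lambda_-q_1)-S_I\Big), \] \[ \mathcal H_2^{\rm p}(q_1,q_2)=\tfrac12\Big(\tfrac{S_+}{\rho_+}m_+\lambda_+\tanh\big(\lambda_+\tfrac{q_2-q_1}{2}\big)+\tfrac{S_-}{\rho_-}m_-\lambda_-\tanh(\lambda_-(\mathcal L-q_2))+S_I\Big), \] the function \[ \mathcal E(q_1,q_2)=\frac{\frac{S_-}{\rho_-}m_-}{2}\ln\cosh(\lambda_-q_1)+\frac{\frac{S_-}{\rho_-}m_-}{2}\ln\cosh(\lambda_-(\mathcal L-q_2))-\frac{S_+}{\rho_+}m_+\ln\cosh\Big(\lambda_+\frac{q_2-q_1}{2}\Big)+\frac12S_I(q_1-q_2), \] and the set $\mathcal T=\{(q_1,q_2)\in\mathbb R^2: 0\le q_2\le\mathcal L,\ 0\le q_1\le q_2\}$. Then the system admits a unique symmetric stationary solution $(q_1^\star,q_2^\star)$, with $q_1^\star=\mathcal L-q_2^\star\in(0,\mathcal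 L/2)$, which is the global minimum of $\mathcal E$ on $\mathcal T$. Moreover, every solution with initial data $(q_1(0),q_2(0))\in\mathcal T$ converges to $(q_1^\star,q_2^\star)$ as $t\to\infty$.
   Context: A symmetric stationary solution is a pair $(q_1^\star,q_2^\star)$ with $\mathcal H_1^{\rm p}(q_1^\star,q_2^\star)=\mathcal H_2^{\rm p}(q_1^\star,q_2^\star)=0$ and $q_1^\star=\mathcal L-q_2^\star$. *)

theory Defs
  imports Complex_Main
begin

definition H1p :: "real \<Rightarrow> real \<Rightarrow> real \<Rightarrow> real \<Rightarrow> real \<Rightarrow> real \<Rightarrow> real \<Rightarrow> real \<Rightarrow> real \<Rightarrow> real \<Rightarrow> real" where
  "H1p L mp mm rp rm Sp Sm SI q1 q2 =
     (1/2) * ( - (Sp / rp) * mp * sqrt (rp / mp) * tanh (sqrt (rp / mp) * ((q2 - q1) / 2))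
               - (Sm / rm) * mm * sqrt (rm / mm) * tanh (sqrt (rm / mm) * q1)
               - SI)"

definition H2p :: "real \<Rightarrow> real \<Rightarrow> real \<Rightarrow> real \<Rightarrow> real \<Rightarrow> real \<Rightarrow> real \<Rightarrow> real \<Rightarrow> real \<Rightarrow> real \<Rightarrow> real" where
  "H2p L mp mm rp rm Sp Sm SI q1 q2 =
     (1/2) * ( (Sp / rp) * mp * sqrt (rp / mp) * tanh (sqrt (rp / mp) * ((q2 - q1) / 2))
               + (Sm / rm) * mm * sqrt (rm / mm) * tanh (sqrt (rm / mm) * (L - q2))
               + SI)"

definition Ep :: "real \<Rightarrow> real \<Rightarrow> real \<Rightarrow> real \<Rightarrow> real \<Rightarrow> real \<Rightarrow> real \<Rightarrow> real \<Rightarrow> real \<Rightarrow> real \<Rightarrow> real" where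
  "Ep L mp mm rp rm Sp Sm SI q1 q2 =
       ((Sm / rm) * mm / 2) * ln (cosh (sqrt (rm / mm) * q1))
     + ((Sm / rm) * mm / 2) * ln (cosh (sqrt (rm / mm) * (L - q2)))
     - (Sp / rp) * mp * ln (cosh (sqrt (rp / mp) * ((q2 - q1) / 2)))
     + (1/2) * SI * (q1 - q2)"

definition Tset :: "real \<Rightarrow> (real \<times> real) set" where
  "Tset L = {(q1, q2). 0 \<le> q2 \<and> q2 \<le> L \<and> 0 \<le> q1 \<and> q1 \<le> q2}"

definition sym_stationary :: "real \<Rightarrow> real \<Rightarrow> real \<Rightarrow> real \<Rightarrow> real \<Rightarrow> real \<Rightarrow> real \<Rightarrow> real \<Rightarrow> real \<Rightarrow> real \<Rightarrow> bool" where
  "sym_stationary L mp mm rp rm Sp Sm SI q1 q2 \<longleftrightarrow>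
     H1p L mp mm rp rm Sp Sm SI q1 q2 = 0 \<and> H2p L mp mm rp rm Sp Sm SI q1 q2 = 0 \<and> q1 = L - q2"

end

theory Submission
  imports Defs
begin

(* The system is the gradient flow of the energy: H1 = -dE/dq1 and H2 = -dE/dq2, and E is
   convex, being a positive combination of ln cosh composed with affine maps. On the line
   q1 = L - q2 both equations reduce to the vanishing of one strictly increasing function of q1
   that changes sign on [0, L/2]; its root is the symmetric stationary point, and the tangent
   inequality for ln cosh shows that it minimises E. Along any solution the squared distance V to
   this point has V' = -(sum of increments of tanh, each weighted by its argument difference)
   <= 0, so solutions stay in a ball; there the slope of tanh is bounded below, which gives
   V' <= -c V and exponential decay of V. *)

lemma tanh_diff_real: "tanh (x::real) - tanh y = sinh (x - y) / (cosh x * cosh y)"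
  by (simp add: tanh_def sinh_diff field_simps)

lemma sq_le_mult_sinh: "(x::real)\<^sup>2 \<le> x * sinh x"
proof -
  have "\<bar>x\<bar> \<le> \<bar>sinh x\<bar>"
    using real_le_abs_sinh[of x] by (simp add: sinh_field_def exp_minus)
  then have "\<bar>x\<bar> * \<bar>x\<bar> \<le> \<bar>x\<bar> * \<bar>sinh x\<bar>"
    by (rule mult_left_mono) simp
  moreover have "x * sinh x = \<bar>x\<bar> * \<bar>sinh x\<bar>"
    by (cases "x \<ge> 0") (auto simp: abs_if)
  ultimately show ?thesis
    by (simp add: power2_eq_square)
qed

lemma tanh_increment_ge:
  fixes k x y :: real
  assumes "k > 0"
  shows "k * (x - y)\<^sup>2 / (cosh (k * x) * cosh (k * y)) \<le> (x - y) * (tanh (k * x) - tanh (k * y))"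
proof -
  have "k * (k * (x - y)\<^sup>2) \<le> k * ((x - y) * sinh (k * x - k * y))"
    using sq_le_mult_sinh[of "k * (x - y)"] by (simp add: power2_eq_square algebra_simps)
  then have "k * (x - y)\<^sup>2 \<le> (x - y) * sinh (k * x - k * y)"
    using assms by simp
  then show ?thesis
    by (simp add: tanh_diff_real divide_right_mono)
qed

lemma tanh_increment_ge_bounded:
  fixes k x y M :: real
  assumes "k > 0" and "\<bar>x\<bar> \<le> M" and "\<bar>y\<bar> \<le> M"
  shows "k * (x - y)\<^sup>2 / (cosh (k * M))\<^sup>2 \<le> (x - y) * (tanh (k * x) - tanh (k * y))"
proof -
  have cosh_le: "cosh (k * z) \<le> cosh (k * M)" if "\<bar>z\<bar> \<le> M" for z
  proof -
    have "cosh (k * z) = cosh (k * \<bar>z\<bar>)"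
      using assms(1) by (metis abs_mult abs_of_pos cosh_real_abs)
    also have "\<dots> \<le> cosh (k * M)"
      using assms(1) that by (subst cosh_real_nonneg_le_iff) auto
    finally show ?thesis .
  qed
  have "cosh (k * x) * cosh (k * y) \<le> (cosh (k * M))\<^sup>2"
    unfolding power2_eq_square using cosh_le assms(2,3) by (intro mult_mono) auto
  then have "k * (x - y)\<^sup>2 / (cosh (k * M))\<^sup>2 \<le> k * (x - y)\<^sup>2 / (cosh (k * x) * cosh (k * y))"
    using assms(1) by (intro divide_left_mono) auto
  then show ?thesis
    using tanh_increment_ge[OF assms(1), of x y] by (rule order.trans)
qed

lemma tanh_increment_nonneg:
  fixes k x y :: real
  assumes "k \<ge> 0"
  shows "0 \<le> (x - y) * (tanh (k * x) - tanh (k * y))"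
  using assms by (cases "x \<le> y") (auto simp: zero_le_mult_iff mult_left_mono)

lemma ln_cosh_tangent: "ln (cosh x) + tanh x * (y - x) \<le> ln (cosh (y::real))"
proof -
  define g where "g z = ln (cosh z) - tanh x * z" for z
  have g': "(g has_real_derivative tanh z - tanh x) (at z)" for z
    unfolding g_def by (auto intro!: derivative_eq_intros simp: tanh_def)
  have "g x \<le> g y"
  proof (cases "x \<le> y")
    case True
    show ?thesis
    proof (rule DERIV_nonneg_imp_nondecreasing[OF True])
      show "\<exists>D. (g has_real_derivative D) (at z) \<and> 0 \<le> D" if "x \<le> z" for z
        using g'[of z] that by auto
    qed
  next
    case False
    show ?thesis
    proof (rule DERIV_nonpos_imp_nonincreasing[of y x])
      show "\<exists>D. (g has_real_derivative D) (at z) \<and> D \<le> 0" if "z \<le> x" for z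
        using g'[of z] that by auto
    qed (use False in auto)
  qed
  then show ?thesis
    by (simp add: g_def algebra_simps)
qed

lemma exp_decay_of_deriv_within:
  fixes V V' :: "real \<Rightarrow> real" and c t :: real
  assumes V': "\<And>s. s \<ge> 0 \<Longrightarrow> (V has_real_derivative V' s) (at s within {0..})"
    and decay: "\<And>s. s \<ge> 0 \<Longrightarrow> V' s \<le> - c * V s"
    and "t \<ge> 0"
  shows "V t \<le> V 0 * exp (- c * t)"
proof -
  define W where "W s = V s * exp (c * s)" for s
  define W' where "W' s = (V' s + c * V s) * exp (c * s)" for s
  have W': "(W has_real_derivative W' s) (at s within {0..})" if "s \<ge> 0" for s
    unfolding W_def[abs_def] W'_def
    by (rule derivative_eq_intros V'[OF that] refl | simp add: algebra_simps)+
  have "W t \<le> W 0"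
  proof (rule DERIV_nonpos_imp_decreasing_open[OF \<open>t \<ge> 0\<close>])
    fix s :: real
    assume s: "0 < s" "s < t"
    have "(W has_real_derivative W' s) (at s within {0<..})"
      using W'[of s] s by (rule_tac DERIV_subset) auto
    then have "(W has_real_derivative W' s) (at s)"
      using s at_within_open[of s "{0<..}"] by auto
    moreover have "W' s \<le> 0"
      using decay[of s] s by (simp add: W'_def mult_nonpos_nonneg)
    ultimately show "\<exists>D. (W has_real_derivative D) (at s) \<and> D \<le> 0"
      by blast
  next
    show "continuous_on {0..t} W"
      by (rule DERIV_continuous_on[where D = W']) (auto intro: DERIV_subset W')
  qed
  then have "V t * exp (c * t) * exp (- c * t) \<le> V 0 * exp (- c * t)"
    by (intro mult_right_mono) (auto simp: W_def)
  then show ?thesis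
    by (simp add: mult.assoc flip: exp_add)
qed

lemma tendsto_of_sq_dist_le:
  fixes f g :: "'a \<Rightarrow> real"
  assumes "(g \<longlongrightarrow> 0) F" and "eventually (\<lambda>t. (f t - x)\<^sup>2 \<le> g t) F"
  shows "(f \<longlongrightarrow> x) F"
proof -
  have "eventually (\<lambda>t. 0 \<le> norm (f t - x)) F"
    by simp
  moreover have "eventually (\<lambda>t. norm (f t - x) \<le> sqrt (g t)) F"
    using assms(2) by eventually_elim (auto intro: real_le_rsqrt)
  moreover have "((\<lambda>t. sqrt (g t)) \<longlongrightarrow> 0) F"
    using tendsto_real_sqrt[OF assms(1)] by simp
  ultimately have "((\<lambda>t. norm (f t - x)) \<longlongrightarrow> 0) F"
    by (rule tendsto_sandwich[OF _ _ tendsto_const])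
  then show ?thesis
    by (rule LIM_zero_cancel[OF tendsto_norm_zero_cancel])
qed

(* With A = -(S+/rho+) m+, B = (S-/rho-) m-, k = lambda+ and l = lambda-, the functions h1, h2
   and energy below are H1p, H2p and Ep for S_I = 0. *)
locale tanh_front_system =
  fixes L A B k l :: real
  assumes L_pos: "0 < L" and A_pos: "0 < A" and B_pos: "0 < B"
    and k_pos: "0 < k" and l_pos: "0 < l"
begin

definition h1 :: "real \<Rightarrow> real \<Rightarrow> real" where
  "h1 u v = (A * k * tanh (k * ((v - u) / 2)) - B * l * tanh (l * u)) / 2"

definition h2 :: "real \<Rightarrow> real \<Rightarrow> real" where
  "h2 u v = (B * l * tanh (l * (L - v)) - A * k * tanh (k * ((v - u) / 2))) / 2"

definition energy :: "real \<Rightarrow> real \<Rightarrow> real" where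
  "energy u v = B / 2 * ln (cosh (l * u)) + B / 2 * ln (cosh (l * (L - v)))
     + A * ln (cosh (k * ((v - u) / 2)))"

definition balance :: "real \<Rightarrow> real" where
  "balance x = B * l * tanh (l * x) - A * k * tanh (k * (L / 2 - x))"

lemma h1_h2_symmetric: "h1 x (L - x) = - balance x / 2" "h2 x (L - x) = balance x / 2"
proof -
  have "(L - x - x) / 2 = L / 2 - x"
    by simp
  then show "h1 x (L - x) = - balance x / 2" "h2 x (L - x) = balance x / 2"
    by (simp_all add: h1_def h2_def balance_def field_simps)
qed

lemma balance_strict_mono: "strict_mono balance"
proof (rule strict_monoI)
  fix x y :: real
  assume "x < y"
  then have "B * l * tanh (l * x) < B * l * tanh (l * y)"
    and "A * k * tanh (k * (L / 2 - y)) < A * k * tanh (k * (L / 2 - x))"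
    using A_pos B_pos k_pos l_pos by simp_all
  then show "balance x < balance y"
    by (simp add: balance_def)
qed

definition qs :: real where
  "qs = (THE x. balance x = 0)"

lemma balance_eq_0_iff: "balance x = 0 \<longleftrightarrow> x = qs"
  and qs_bounds: "0 < qs" "qs < L / 2"
proof -
  have "balance 0 < 0" "0 < balance (L / 2)"
    using A_pos B_pos k_pos l_pos L_pos by (simp_all add: balance_def)
  moreover have "continuous_on {0..L / 2} balance"
    unfolding balance_def by (intro continuous_intros) auto
  ultimately obtain x where x: "0 \<le> x" "x \<le> L / 2" "balance x = 0"
    using IVT'[of balance 0 0 "L / 2"] L_pos by auto
  have unique: "balance y = 0 \<longleftrightarrow> y = x" for y
    using strict_mono_eq[OF balance_strict_mono, of y x] x(3) by simp
  then have "qs = x"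
    unfolding qs_def by blast
  then show "balance y = 0 \<longleftrightarrow> y = qs" for y
    using unique by simp
  have "x \<noteq> 0" "x \<noteq> L / 2"
    using x(3) \<open>balance 0 < 0\<close> \<open>0 < balance (L / 2)\<close> by auto
  then show "0 < qs" "qs < L / 2"
    using \<open>qs = x\<close> x(1,2) by auto
qed

lemma symmetric_stationary_iff:
  "h1 u v = 0 \<and> h2 u v = 0 \<and> u = L - v \<longleftrightarrow> u = qs \<and> v = L - qs"
  using h1_h2_symmetric[of u] balance_eq_0_iff[of u] by auto

lemma energy_ge_stationary: "energy qs (L - qs) \<le> energy u v"
proof -
  define T1 where "T1 = tanh (l * qs)"
  define T2 where "T2 = tanh (k * (L / 2 - qs))"
  have balanced: "B * l * T1 = A * k * T2"
    using balance_eq_0_iff[of qs] by (simp add: balance_def T1_def T2_def)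
  have tangents:
    "B / 2 * (ln (cosh (l * qs)) + T1 * (l * u - l * qs)) \<le> B / 2 * ln (cosh (l * u))"
    "B / 2 * (ln (cosh (l * qs)) + T1 * (l * (L - v) - l * qs)) \<le> B / 2 * ln (cosh (l * (L - v)))"
    "A * (ln (cosh (k * (L / 2 - qs))) + T2 * (k * ((v - u) / 2) - k * (L / 2 - qs)))
       \<le> A * ln (cosh (k * ((v - u) / 2)))"
    using A_pos B_pos unfolding T1_def T2_def by (intro mult_left_mono ln_cosh_tangent; simp)+
  have tangent_terms_cancel: "B / 2 * (T1 * (l * u - l * qs)) + B / 2 * (T1 * (l * (L - v) - l * qs))
      + A * (T2 * (k * ((v - u) / 2) - k * (L / 2 - qs))) = 0"
  proof -
    have "B / 2 * (T1 * (l * u - l * qs)) + B / 2 * (T1 * (l * (L - v) - l * qs))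
        + A * (T2 * (k * ((v - u) / 2) - k * (L / 2 - qs)))
        = B * l * T1 / 2 * (u + (L - v) - 2 * qs) + A * k * T2 / 2 * ((v - u) - L + 2 * qs)"
      by (simp add: field_simps)
    also have "\<dots> = A * k * T2 / 2 * ((u + (L - v) - 2 * qs) + ((v - u) - L + 2 * qs))"
      unfolding balanced by (simp only: distrib_left)
    finally show ?thesis
      by simp
  qed
  have "L - (L - qs) = qs" "(L - qs - qs) / 2 = L / 2 - qs"
    by simp_all
  then have energy_qs: "energy qs (L - qs)
      = B / 2 * ln (cosh (l * qs)) + B / 2 * ln (cosh (l * qs)) + A * ln (cosh (k * (L / 2 - qs)))"
    unfolding energy_def by (simp only:)
  show ?thesis
    using tangents tangent_terms_cancel unfolding energy_qs energy_def[of u v] distrib_left by linarith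
qed

lemma lyapunov_rate_eq:
  "2 * (u - qs) * h1 u v + 2 * (v - (L - qs)) * h2 u v =
    - (2 * A * k * (((v - u) / 2 - (L / 2 - qs)) * (tanh (k * ((v - u) / 2)) - tanh (k * (L / 2 - qs))))
       + B * l * ((u - qs) * (tanh (l * u) - tanh (l * qs)))
       + B * l * (((L - v) - qs) * (tanh (l * (L - v)) - tanh (l * qs))))"
proof -
  have identity: "2 * (u - x) * ((a * Tw - b * Tu) / 2) + 2 * (v - (L - x)) * ((b * Tv - a * Tw) / 2) =
    - (2 * a * (((v - u) / 2 - (L / 2 - x)) * (Tw - Tws)) + b * ((u - x) * (Tu - Tx))
       + b * (((L - v) - x) * (Tv - Tx)))
    + (b * Tx - a * Tws) * ((v - u) - L + 2 * x)" for a b x Tw Tu Tv Tx Tws :: real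
    by (simp add: field_simps)
  have "balance qs = 0"
    by (simp add: balance_eq_0_iff)
  then show ?thesis
    unfolding h1_def h2_def balance_def
      identity[where Tx = "tanh (l * qs)" and Tws = "tanh (k * (L / 2 - qs))"]
    by simp
qed

lemma lyapunov_rate_nonpos: "2 * (u - qs) * h1 u v + 2 * (v - (L - qs)) * h2 u v \<le> 0"
proof -
  have "0 \<le> 2 * A * k * (((v - u) / 2 - (L / 2 - qs)) * (tanh (k * ((v - u) / 2)) - tanh (k * (L / 2 - qs))))"
    and "0 \<le> B * l * ((u - qs) * (tanh (l * u) - tanh (l * qs)))"
    and "0 \<le> B * l * (((L - v) - qs) * (tanh (l * (L - v)) - tanh (l * qs)))"
    using A_pos B_pos k_pos l_pos by (intro mult_nonneg_nonneg tanh_increment_nonneg; simp)+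
  then show ?thesis
    unfolding lyapunov_rate_eq by linarith
qed

lemma lyapunov_rate_le:
  assumes "0 \<le> R" and dist_le: "(u - qs)\<^sup>2 + (v - (L - qs))\<^sup>2 \<le> R\<^sup>2"
  shows "2 * (u - qs) * h1 u v + 2 * (v - (L - qs)) * h2 u v
    \<le> - (B * l\<^sup>2 / (cosh (l * (qs + R)))\<^sup>2) * ((u - qs)\<^sup>2 + (v - (L - qs))\<^sup>2)"
proof -
  define C where "C = (cosh (l * (qs + R)))\<^sup>2"
  have swap: "((L - v) - qs)\<^sup>2 = (v - (L - qs))\<^sup>2"
    by (simp add: power2_eq_square algebra_simps)
  have "(u - qs)\<^sup>2 \<le> R\<^sup>2" "((L - v) - qs)\<^sup>2 \<le> R\<^sup>2"
    using dist_le zero_le_power2[of "u - qs"] zero_le_power2[of "v - (L - qs)"] unfolding swap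
    by linarith+
  then have "\<bar>u - qs\<bar> \<le> R" "\<bar>(L - v) - qs\<bar> \<le> R"
    using \<open>0 \<le> R\<close> by (simp_all add: power2_le_iff_abs_le)
  then have "\<bar>u\<bar> \<le> qs + R" "\<bar>L - v\<bar> \<le> qs + R" "\<bar>qs\<bar> \<le> qs + R"
    using qs_bounds \<open>0 \<le> R\<close> by auto
  then have "B * l * (l * (u - qs)\<^sup>2 / C) \<le> B * l * ((u - qs) * (tanh (l * u) - tanh (l * qs)))"
    and "B * l * (l * ((L - v) - qs)\<^sup>2 / C)
      \<le> B * l * (((L - v) - qs) * (tanh (l * (L - v)) - tanh (l * qs)))"
    unfolding C_def using B_pos l_pos by (intro mult_left_mono tanh_increment_ge_bounded; simp)+
  moreover have "0 \<le> 2 * A * k * (((v - u) / 2 - (L / 2 - qs)) * (tanh (k * ((v - u) / 2)) - tanh (k * (L / 2 - qs))))"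
    using A_pos k_pos by (intro mult_nonneg_nonneg tanh_increment_nonneg) simp_all
  moreover have "- (B * l\<^sup>2 / C) * (X + Y) = - (B * l * (l * X / C) + B * l * (l * Y / C))" for X Y
    by (simp add: power2_eq_square ring_distribs)
  note this[of "(u - qs)\<^sup>2" "((L - v) - qs)\<^sup>2"]
  ultimately show ?thesis
    unfolding lyapunov_rate_eq C_def[symmetric] swap[symmetric] by linarith
qed

lemma solution_tendsto_stationary:
  fixes q1 q2 :: "real \<Rightarrow> real"
  assumes ode: "\<forall>t\<ge>0. (q1 has_real_derivative h1 (q1 t) (q2 t)) (at t within {0..})
                     \<and> (q2 has_real_derivative h2 (q1 t) (q2 t)) (at t within {0..})"
  shows "(q1 \<longlongrightarrow> qs) at_top \<and> (q2 \<longlongrightarrow> L - qs) at_top"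
proof -
  define V where "V t = (q1 t - qs)\<^sup>2 + (q2 t - (L - qs))\<^sup>2" for t
  define V' where "V' t = 2 * (q1 t - qs) * h1 (q1 t) (q2 t) + 2 * (q2 t - (L - qs)) * h2 (q1 t) (q2 t)" for t
  have V': "(V has_real_derivative V' t) (at t within {0..})" if "t \<ge> 0" for t
  proof -
    have "(q1 has_real_derivative h1 (q1 t) (q2 t)) (at t within {0..})"
      and "(q2 has_real_derivative h2 (q1 t) (q2 t)) (at t within {0..})"
      using ode that by auto
    then show ?thesis
      unfolding V_def[abs_def] V'_def by (auto intro!: derivative_eq_intros simp: algebra_simps)
  qed
  have rate_nonpos: "V' t \<le> - 0 * V t" for t
    using lyapunov_rate_nonpos by (simp add: V'_def)
  have V_bounded: "V t \<le> V 0" if "t \<ge> 0" for t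
    using exp_decay_of_deriv_within[OF V' rate_nonpos that] by simp
  define R where "R = sqrt (V 0)"
  define c where "c = B * l\<^sup>2 / (cosh (l * (qs + R)))\<^sup>2"
  have "0 \<le> R" "R\<^sup>2 = V 0"
    by (simp_all add: R_def V_def)
  have rate: "V' t \<le> - c * V t" if "t \<ge> 0" for t
  proof -
    have "(q1 t - qs)\<^sup>2 + (q2 t - (L - qs))\<^sup>2 \<le> R\<^sup>2"
      using V_bounded[OF that] \<open>R\<^sup>2 = V 0\<close> unfolding V_def[of t] by linarith
    then show ?thesis
      unfolding V'_def V_def[of t] c_def by (rule lyapunov_rate_le[OF \<open>0 \<le> R\<close>])
  qed
  have sq_le: "(q1 t - qs)\<^sup>2 \<le> V 0 * exp (- c * t)" "(q2 t - (L - qs))\<^sup>2 \<le> V 0 * exp (- c * t)"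
    if "t \<ge> 0" for t
    using exp_decay_of_deriv_within[OF V' rate that] zero_le_power2[of "q1 t - qs"]
      zero_le_power2[of "q2 t - (L - qs)"]
    unfolding V_def[of t] by linarith+
  have "0 < c"
    using B_pos l_pos by (simp add: c_def)
  then have "filterlim (\<lambda>t. - c * t) at_bot at_top"
    by (intro filterlim_tendsto_neg_mult_at_bot[OF tendsto_const] filterlim_ident) simp
  then have decay: "((\<lambda>t. V 0 * exp (- c * t)) \<longlongrightarrow> 0) at_top"
    by (intro tendsto_mult_right_zero filterlim_compose[OF exp_at_bot])
  show ?thesis
    using tendsto_of_sq_dist_le[OF decay eventually_mono[OF eventually_ge_at_top[of 0] sq_le(1)]]
      tendsto_of_sq_dist_le[OF decay eventually_mono[OF eventually_ge_at_top[of 0] sq_le(2)]]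
    by simp
qed

end

theorem proposition4p3:
  fixes L mp mm rp rm Sp Sm SI :: real
  assumes "L > 0" and "mp > 0" and "mm > 0" and "rp > 0" and "rm > 0"
    and "Sp < 0" and "0 < Sm" and "SI = 0"
  shows "\<exists>q1s q2s.
     sym_stationary L mp mm rp rm Sp Sm SI q1s q2s
   \<and> (\<forall>a b. sym_stationary L mp mm rp rm Sp Sm SI a b \<longrightarrow> a = q1s \<and> b = q2s)
   \<and> 0 < q1s \<and> q1s < L / 2
   \<and> (q1s, q2s) \<in> Tset L
   \<and> (\<forall>(a, b) \<in> Tset L. Ep L mp mm rp rm Sp Sm SI q1s q2s \<le> Ep L mp mm rp rm Sp Sm SI a b)
   \<and> (\<forall>q1 q2 :: real \<Rightarrow> real.
        (q1 0, q2 0) \<in> Tset L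
      \<and> (\<forall>t\<ge>0. (q1 has_real_derivative H1p L mp mm rp rm Sp Sm SI (q1 t) (q2 t)) (at t within {0..})
               \<and> (q2 has_real_derivative H2p L mp mm rp rm Sp Sm SI (q1 t) (q2 t)) (at t within {0..}))
      \<longrightarrow> (q1 \<longlongrightarrow> q1s) at_top \<and> (q2 \<longlongrightarrow> q2s) at_top)"
proof -
  interpret S: tanh_front_system L "- (Sp / rp) * mp" "Sm / rm * mm" "sqrt (rp / mp)" "sqrt (rm / mm)"
    using assms by unfold_locales (auto simp: divide_neg_pos mult_neg_pos)
  have H: "H1p L mp mm rp rm Sp Sm SI = S.h1" "H2p L mp mm rp rm Sp Sm SI = S.h2"
    and E: "Ep L mp mm rp rm Sp Sm SI = S.energy"
    unfolding fun_eq_iff H1p_def H2p_def Ep_def S.h1_def S.h2_def S.energy_def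
    using \<open>SI = 0\<close> by (simp_all add: algebra_simps)
  have stationary_iff: "sym_stationary L mp mm rp rm Sp Sm SI a b \<longleftrightarrow> a = S.qs \<and> b = L - S.qs" for a b
    unfolding sym_stationary_def H by (rule S.symmetric_stationary_iff)
  have "(S.qs, L - S.qs) \<in> Tset L"
    using S.qs_bounds by (auto simp: Tset_def)
  (* Convergence holds for arbitrary initial data. *)
  then show ?thesis
    using stationary_iff S.qs_bounds S.energy_ge_stationary S.solution_tendsto_stationary
    unfolding H E by blast
qed

end
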